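(* Let $\tau\in[0,1]$ and suppose the decision tree $T$ is everywhere $\tau$-influential with respect to $f:\{0,1\}^n\to\{0,1\}$. Then for every $i\in[n]$, $\mathrm{Inf}_i[f]\ge\tau\cdot\delta_i(T)$.
   Context: $\mathrm{Inf}_i[g]=\Pr_{x\sim\{0,1\}^n}[g(x)\ne g(x^{\oplus i})]$ for uniform $x$. For an internal node $v$ of $T$, $\mathrm{ind}(v)$ is the index of the variable queried at $v$, and $f_v$ is the restriction of $f$ induced by the root-to-$v$ path. $T$ is everywhere $\tau$-influential w.r.t. $f$ if $\mathrm{Inf}_{\mathrm{ind}(v)}[f_v]\ge\tau$ for every internal node $v$. $\delta_i(T)=\Pr_{x\sim\{0,1\}^n}[T\text{ queries }x_i\text{ on input }x]$. *)

theory Defs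
  imports Complex_Main
begin

text \<open>Points of the cube {0,1}^n: functions nat => bool, variables indexed 0..n-1,
  with all coordinates >= n fixed to False.\<close>
definition cube :: "nat \<Rightarrow> (nat \<Rightarrow> bool) set" where
  "cube n = {x. \<forall>j\<ge>n. \<not> x j}"

definition flip :: "(nat \<Rightarrow> bool) \<Rightarrow> nat \<Rightarrow> (nat \<Rightarrow> bool)" where
  "flip x i = x(i := \<not> x i)"

definition prob_cube :: "nat \<Rightarrow> ((nat \<Rightarrow> bool) \<Rightarrow> bool) \<Rightarrow> real" where
  "prob_cube n P = real (card {x \<in> cube n. P x}) / 2 ^ n"

definition Inf :: "nat \<Rightarrow> nat \<Rightarrow> ((nat \<Rightarrow> bool) \<Rightarrow> bool) \<Rightarrow> real" where
  "Inf n i g = prob_cube n (\<lambda>x. g x \<noteq> g (flip x i))"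

text \<open>Decision trees: Node i l r queries x_i, goes to l if x_i = 0 (False), r if x_i = 1.\<close>
datatype dtree = Leaf bool | Node nat dtree dtree

fun queried_vars :: "dtree \<Rightarrow> nat set" where
  "queried_vars (Leaf b) = {}"
| "queried_vars (Node j l r) = insert j (queried_vars l \<union> queried_vars r)"

fun queries :: "dtree \<Rightarrow> (nat \<Rightarrow> bool) \<Rightarrow> nat \<Rightarrow> bool" where
  "queries (Leaf b) x i = False"
| "queries (Node j l r) x i = (j = i \<or> (if x j then queries r x i else queries l x i))"

definition delta :: "nat \<Rightarrow> dtree \<Rightarrow> nat \<Rightarrow> real" where
  "delta n T i = prob_cube n (\<lambda>x. queries T x i)"

definition restrict_fn :: "((nat \<Rightarrow> bool) \<Rightarrow> bool) \<Rightarrow> (nat \<Rightarrow> bool option) \<Rightarrow> (nat \<Rightarrow> bool) \<Rightarrow> bool" where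
  "restrict_fn f \<rho> x = f (\<lambda>k. case \<rho> k of None \<Rightarrow> x k | Some b \<Rightarrow> b)"

text \<open>Everywhere tau-influential, where rho is the restriction accumulated along the root-to-node path.\<close>
fun everywhere_infl_aux :: "nat \<Rightarrow> real \<Rightarrow> ((nat \<Rightarrow> bool) \<Rightarrow> bool) \<Rightarrow> (nat \<Rightarrow> bool option) \<Rightarrow> dtree \<Rightarrow> bool" where
  "everywhere_infl_aux n \<tau> f \<rho> (Leaf b) = True"
| "everywhere_infl_aux n \<tau> f \<rho> (Node j l r) =
     (Inf n j (restrict_fn f \<rho>) \<ge> \<tau>
      \<and> everywhere_infl_aux n \<tau> f (\<rho>(j := Some False)) l
      \<and> everywhere_infl_aux n \<tau> f (\<rho>(j := Some True)) r)"

definition everywhere_infl :: "nat \<Rightarrow> real \<Rightarrow> ((nat \<Rightarrow> bool) \<Rightarrow> bool) \<Rightarrow> dtree \<Rightarrow> bool" where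
  "everywhere_infl n \<tau> f T = everywhere_infl_aux n \<tau> f (\<lambda>_. None) T"

end

theory Submission
  imports Defs
begin

text \<open>Induction on the tree, carrying the restriction \<rho> accumulated along the path.
  At a node querying a free variable j \<noteq> i, both the probability that x_i is queried and
  the influence of x_i on the restricted function are the averages of the corresponding
  quantities for the two restrictions x_j = 0 and x_j = 1, so the inequality passes from
  the subtrees to the node. At a node querying x_i itself, influentiality gives
  Inf_i \<ge> \<tau> \<ge> \<tau> \<delta>_i.\<close>

lemma cube_eq_image_Pow: "cube n = (\<lambda>A k. k \<in> A) ` Pow {..<n}"
proof
  show "cube n \<subseteq> (\<lambda>A k. k \<in> A) ` Pow {..<n}"
  proof
    fix x assume "x \<in> cube n"
    then have "{k. x k} \<in> Pow {..<n}" unfolding cube_def by (auto simp: not_less[symmetric])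
    moreover have "x = (\<lambda>k. k \<in> {k. x k})" by auto
    ultimately show "x \<in> (\<lambda>A k. k \<in> A) ` Pow {..<n}" by blast
  qed
  show "(\<lambda>A k. k \<in> A) ` Pow {..<n} \<subseteq> cube n" unfolding cube_def by auto
qed

lemma finite_cube [simp]: "finite (cube n)"
  unfolding cube_eq_image_Pow by simp

lemma card_cube: "card (cube n) = 2 ^ n"
proof -
  have "inj_on (\<lambda>A k. k \<in> A) (Pow {..<n})"
    by (rule inj_onI) (metis Collect_mem_eq)
  then show ?thesis unfolding cube_eq_image_Pow by (simp add: card_image card_Pow)
qed

lemma flip_in_cube: "j < n \<Longrightarrow> x \<in> cube n \<Longrightarrow> flip x j \<in> cube n"
  unfolding cube_def flip_def by auto

lemma flip_flip [simp]: "flip (flip x j) j = x"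
  by (simp add: flip_def)

lemma flip_fun_upd: "j \<noteq> i \<Longrightarrow> flip (x(j := b)) i = (flip x i)(j := b)"
  unfolding flip_def by (auto simp: fun_eq_iff)

lemma sum_cube_average:
  fixes h :: "(nat \<Rightarrow> bool) \<Rightarrow> 'a::comm_semiring_1"
  assumes "j < n"
  shows "(\<Sum>x\<in>cube n. h (x(j := False))) + (\<Sum>x\<in>cube n. h (x(j := True)))
    = 2 * (\<Sum>x\<in>cube n. h x)"
proof -
  have "h (x(j := False)) + h (x(j := True)) = h x + h (flip x j)" for x
    unfolding flip_def by (cases "x j") (auto simp: fun_upd_idem add.commute)
  then have "(\<Sum>x\<in>cube n. h (x(j := False))) + (\<Sum>x\<in>cube n. h (x(j := True)))
      = (\<Sum>x\<in>cube n. h x) + (\<Sum>x\<in>cube n. h (flip x j))"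
    by (simp add: sum.distrib[symmetric])
  also have "(\<Sum>x\<in>cube n. h (flip x j)) = (\<Sum>x\<in>cube n. h x)"
    by (rule sum.reindex_bij_witness[where i="\<lambda>x. flip x j" and j="\<lambda>x. flip x j"])
      (simp_all add: flip_in_cube[OF assms])
  finally show ?thesis by (simp only: mult_2)
qed

lemma prob_cube_eq_sum: "prob_cube n P = (\<Sum>x\<in>cube n. of_bool (P x)) / 2 ^ n"
  unfolding prob_cube_def by (simp add: Int_def)

lemma prob_cube_le_1: "prob_cube n P \<le> 1"
proof -
  have "card {x \<in> cube n. P x} \<le> card (cube n)"
    by (rule card_mono) auto
  then show ?thesis unfolding prob_cube_def card_cube by simp
qed

lemma prob_cube_average:
  assumes "j < n"
  shows "prob_cube n P
    = (prob_cube n (\<lambda>x. P (x(j := False))) + prob_cube n (\<lambda>x. P (x(j := True)))) / 2"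
  using sum_cube_average[OF assms, of "\<lambda>x. of_bool (P x) :: real"]
  unfolding prob_cube_eq_sum by (simp add: add_divide_distrib[symmetric])

lemma Inf_average:
  assumes "j < n" and "j \<noteq> i"
  shows "Inf n i g = (Inf n i (\<lambda>x. g (x(j := False))) + Inf n i (\<lambda>x. g (x(j := True)))) / 2"
  unfolding Inf_def by (subst prob_cube_average[OF assms(1)]) (simp add: flip_fun_upd[OF assms(2)])

lemma restrict_fn_empty [simp]: "restrict_fn g (\<lambda>_. None) = g"
  by (simp add: restrict_fn_def fun_eq_iff)

lemma restrict_fn_fun_upd:
  "\<rho> j = None \<Longrightarrow> restrict_fn g (\<rho>(j := Some b)) = (\<lambda>x. restrict_fn g \<rho> (x(j := b)))"
  unfolding restrict_fn_def by (auto simp: fun_eq_iff intro!: arg_cong[where f=g] split: option.split)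

lemma restrict_fn_queries_Node:
  assumes "\<rho> j = Some b" and "j \<noteq> i"
  shows "restrict_fn (\<lambda>y. queries (Node j l r) y i) \<rho>
    = restrict_fn (\<lambda>y. queries (if b then r else l) y i) \<rho>"
  using assms unfolding restrict_fn_def by simp

lemma everywhere_infl_aux_influence_ge_delta:
  assumes "0 \<le> \<tau>" and "queried_vars T \<subseteq> {..<n}" and "\<rho> i = None"
    and "everywhere_infl_aux n \<tau> f \<rho> T"
  shows "\<tau> * prob_cube n (restrict_fn (\<lambda>y. queries T y i) \<rho>) \<le> Inf n i (restrict_fn f \<rho>)"
  using assms(2-)
proof (induction T arbitrary: \<rho>)
  case (Leaf c)
  then show ?case by (simp add: restrict_fn_def Inf_def prob_cube_def)
next
  case (Node j l r)
  let ?Q = "\<lambda>T y. queries T y i"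
  have "j < n" using Node.prems(1) by simp
  have child: "\<tau> * prob_cube n (restrict_fn (?Q (if b then r else l)) (\<rho>(j := Some b)))
      \<le> Inf n i (restrict_fn f (\<rho>(j := Some b)))" if "j \<noteq> i" for b
    using Node that by (cases b) auto
  consider "j = i" | b where "j \<noteq> i" "\<rho> j = Some b" | "j \<noteq> i" "\<rho> j = None"
    by fastforce
  then show ?case
  proof cases
    case 1
    have "\<tau> * prob_cube n (restrict_fn (?Q (Node j l r)) \<rho>) \<le> \<tau>"
      using \<open>0 \<le> \<tau>\<close> prob_cube_le_1 by (simp add: mult_left_le)
    also have "\<tau> \<le> Inf n i (restrict_fn f \<rho>)"
      using Node.prems(3) 1 by simp
    finally show ?thesis .
  next
    case 2
    then have "\<rho>(j := Some b) = \<rho>" by auto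
    then show ?thesis using child[of b] restrict_fn_queries_Node[of \<rho> j b i l r] 2 by simp
  next
    case 3
    have node_child: "restrict_fn (?Q (Node j l r)) (\<rho>(j := Some b))
        = restrict_fn (?Q (if b then r else l)) (\<rho>(j := Some b))" for b
      using 3 by (intro restrict_fn_queries_Node) auto
    have "prob_cube n (restrict_fn (?Q (Node j l r)) \<rho>)
        = (prob_cube n (restrict_fn (?Q (Node j l r)) (\<rho>(j := Some False)))
          + prob_cube n (restrict_fn (?Q (Node j l r)) (\<rho>(j := Some True)))) / 2"
      unfolding restrict_fn_fun_upd[of \<rho> j, OF 3(2)] by (rule prob_cube_average[OF \<open>j < n\<close>])
    also have "\<dots> = (prob_cube n (restrict_fn (?Q l) (\<rho>(j := Some False)))
          + prob_cube n (restrict_fn (?Q r) (\<rho>(j := Some True)))) / 2"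
      by (simp only: node_child if_True if_False)
    finally have delta_average: "prob_cube n (restrict_fn (?Q (Node j l r)) \<rho>) = \<dots>" .
    have influence_average: "Inf n i (restrict_fn f \<rho>)
        = (Inf n i (restrict_fn f (\<rho>(j := Some False)))
          + Inf n i (restrict_fn f (\<rho>(j := Some True)))) / 2"
      using Inf_average[OF \<open>j < n\<close> 3(1)] by (simp add: restrict_fn_fun_upd[of \<rho> j, OF 3(2)])
    show ?thesis
      unfolding delta_average influence_average using child[of False] child[of True] 3(1)
      by (simp add: field_simps)
  qed
qed

theorem mainTheorem9:
  fixes n :: nat and \<tau> :: real and f :: "(nat \<Rightarrow> bool) \<Rightarrow> bool" and T :: dtree
  assumes "0 \<le> \<tau>" and "\<tau> \<le> 1"
    and "queried_vars T \<subseteq> {..<n}"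
    and "everywhere_infl n \<tau> f T"
  shows "\<forall>i<n. Inf n i f \<ge> \<tau> * delta n T i"
  using everywhere_infl_aux_influence_ge_delta[OF assms(1,3), of "\<lambda>_. None"] assms(4)
  unfolding everywhere_infl_def delta_def by simp

end
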